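(* In the Setting, it cannot hold simultaneously that $r=\sqrt{K^2-\lambda_2V}$, $r+s=\sqrt{K-\lambda_1}$, $s=-\sqrt{K-\lambda_1}$, $g_2=0$, $g_1=f-c+1$, $f_1=c-1$ and $f_2=g-c$.
   Context: Setting: $\Gamma$ is a primitive strongly regular graph with parameters $(v,k,\lambda,\mu)$ (a $k$-regular graph on $v$ vertices, any two adjacent vertices having $\lambda$ and any two distinct non-adjacent vertices having $\mu$ common neighbours; primitive means $\Gamma$ and its complement are connected), with spectrum $k^1, r^f, s^g$ where $k>r>s$ and exponents are multiplicities. $C$ is a coclique in $\Gamma$ of size $c=\frac{vs}{s-k}$. A $K$-regular graph on $V$ vertices, neither complete nor edgeless, is a divisible design graph with parameters $(V,K,\lambda_1,\lambda_2;m,n)$ if its vertex set can be partitioned into $m$ canonical classes of size $n$ such that two distinct vertices in the same class have exactly $\lambda_1$ common neighbours and two vertices in different classes have exactly $\lambda_2$ common neighbours; it is proper unless $m=1$, $n=1$ or $\lambda_1=\lambda_2$. It is assumed that the subgraph $\Delta$ induced on $V(\Gamma)\setminus C$ is a proper divisible design graph with parameters $(V,K,\lambda_1,\lambda_2;m,n)$. Let $A$ be the adjacency matrix of $\Delta$, $W$ the space of vectors constant on each canonical class and $\mathbf{1}$ the all-ones vector. It is known that $A$ acts on $W^\perp$ with eigenvalues $\pm\sqrt{K-\lambda_1}$, whose multiplicities are denoted $f_1$ (for $+$) and $f_2$ (for $-$), with $f_1+f_2=m(n-1)$, and on $W\cap\mathbf{1}^\perp$ with eigenvalues $\pm\sqrt{K^2-\lambda_2V}$,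 with multiplicities $g_1$ (for $+$) and $g_2$ (for $-$), $g_1+g_2=m-1$. It is also known that the spectrum of $\Delta$ is $(k+s)^1, r^{f-c+1}, (r+s)^{c-1}, s^{g-c}$, with $c<g$. *)

theory Defs
  imports "HOL-Analysis.Analysis" "HOL-Library.Multiset"
begin

definition is_graph :: "('v \<Rightarrow> 'v \<Rightarrow> bool) \<Rightarrow> bool" where
  "is_graph E \<longleftrightarrow> (\<forall>x y. E x y \<longrightarrow> E y x) \<and> (\<forall>x. \<not> E x x)"

definition common_nbrs :: "('v \<Rightarrow> 'v \<Rightarrow> bool) \<Rightarrow> 'v set \<Rightarrow> 'v \<Rightarrow> 'v \<Rightarrow> nat" where
  "common_nbrs E X x y = card {z \<in> X. E x z \<and> E y z}"

definition graph_connected :: "('v \<Rightarrow> 'v \<Rightarrow> bool) \<Rightarrow> 'v set \<Rightarrow> bool" where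
  "graph_connected E X \<longleftrightarrow>
     (\<forall>x\<in>X. \<forall>y\<in>X. (\<lambda>a b. a \<in> X \<and> b \<in> X \<and> E a b)\<^sup>*\<^sup>* x y)"

definition complement_graph :: "('v \<Rightarrow> 'v \<Rightarrow> bool) \<Rightarrow> 'v \<Rightarrow> 'v \<Rightarrow> bool" where
  "complement_graph E x y \<longleftrightarrow> x \<noteq> y \<and> \<not> E x y"

definition srg :: "('v::finite \<Rightarrow> 'v \<Rightarrow> bool) \<Rightarrow> nat \<Rightarrow> nat \<Rightarrow> nat \<Rightarrow> nat \<Rightarrow> bool" where
  "srg E v k lam mu \<longleftrightarrow> is_graph E \<and> CARD('v) = v \<and>
     (\<forall>x. card {y. E x y} = k) \<and>
     (\<forall>x y. x \<noteq> y \<and> E x y \<longrightarrow> common_nbrs E UNIV x y = lam) \<and>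
     (\<forall>x y. x \<noteq> y \<and> \<not> E x y \<longrightarrow> common_nbrs E UNIV x y = mu)"

definition primitive_srg :: "('v::finite \<Rightarrow> 'v \<Rightarrow> bool) \<Rightarrow> nat \<Rightarrow> nat \<Rightarrow> nat \<Rightarrow> nat \<Rightarrow> bool" where
  "primitive_srg E v k lam mu \<longleftrightarrow> srg E v k lam mu \<and>
     graph_connected E UNIV \<and> graph_connected (complement_graph E) UNIV"

definition coclique :: "('v \<Rightarrow> 'v \<Rightarrow> bool) \<Rightarrow> 'v set \<Rightarrow> bool" where
  "coclique E C \<longleftrightarrow> (\<forall>x\<in>C. \<forall>y\<in>C. \<not> E x y)"

definition adj_matrix :: "('v::finite \<Rightarrow> 'v \<Rightarrow> bool) \<Rightarrow> real^'v^'v" where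
  "adj_matrix E = (\<chi> i j. if E i j then 1 else 0)"

text \<open>Adjacency matrix of the subgraph induced on D, acting on vectors supported on D.\<close>
definition induced_adj_matrix :: "('v::finite \<Rightarrow> 'v \<Rightarrow> bool) \<Rightarrow> 'v set \<Rightarrow> real^'v^'v" where
  "induced_adj_matrix E D = (\<chi> i j. if i \<in> D \<and> j \<in> D \<and> E i j then 1 else 0)"

definition supported_on :: "'v::finite set \<Rightarrow> (real^'v) set" where
  "supported_on D = {x. \<forall>i. i \<notin> D \<longrightarrow> x $ i = 0}"

definition ones_on :: "'v::finite set \<Rightarrow> real^'v" where
  "ones_on D = (\<chi> i. if i \<in> D then 1 else 0)"

definition eig_space :: "(real^'v::finite) set \<Rightarrow> real^'v^'v \<Rightarrow> real \<Rightarrow> (real^'v) set" where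
  "eig_space S M \<theta> = {x \<in> S. M *v x = \<theta> *\<^sub>R x}"

definition eig_mult :: "(real^'v::finite) set \<Rightarrow> real^'v^'v \<Rightarrow> real \<Rightarrow> nat" where
  "eig_mult S M \<theta> = dim (eig_space S M \<theta>)"

definition has_spectrum :: "(real^'v::finite) set \<Rightarrow> real^'v^'v \<Rightarrow> real multiset \<Rightarrow> bool" where
  "has_spectrum S M sp \<longleftrightarrow> (\<forall>\<theta>. eig_mult S M \<theta> = count sp \<theta>)"

definition orth_in :: "(real^'v::finite) set \<Rightarrow> (real^'v) set \<Rightarrow> (real^'v) set" where
  "orth_in S X = {x \<in> S. \<forall>w\<in>X. x \<bullet> w = 0}"

text \<open>Vectors supported on D that are constant on each class of P (the space W).\<close>
definition class_const :: "'v::finite set \<Rightarrow> 'v set set \<Rightarrow> (real^'v) set" where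
  "class_const D P = {x \<in> supported_on D. \<forall>B\<in>P. \<forall>i\<in>B. \<forall>j\<in>B. x $ i = x $ j}"

text \<open>The subgraph of E induced on D is a divisible design graph with parameters
  (V,K,lam1,lam2;m,n) with canonical classes P.\<close>
definition ddg_on :: "('v \<Rightarrow> 'v \<Rightarrow> bool) \<Rightarrow> 'v set \<Rightarrow> nat \<Rightarrow> nat \<Rightarrow> nat \<Rightarrow> nat \<Rightarrow> nat \<Rightarrow> nat
    \<Rightarrow> 'v set set \<Rightarrow> bool" where
  "ddg_on E D V K lam1 lam2 m n P \<longleftrightarrow>
     card D = V \<and>
     (\<forall>x\<in>D. card {y \<in> D. E x y} = K) \<and>
     (\<exists>x\<in>D. \<exists>y\<in>D. x \<noteq> y \<and> \<not> E x y) \<and>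
     (\<exists>x\<in>D. \<exists>y\<in>D. E x y) \<and>
     \<Union>P = D \<and> {} \<notin> P \<and>
     (\<forall>B\<in>P. \<forall>B'\<in>P. B \<noteq> B' \<longrightarrow> B \<inter> B' = {}) \<and>
     card P = m \<and> (\<forall>B\<in>P. card B = n) \<and>
     (\<forall>B\<in>P. \<forall>x\<in>B. \<forall>y\<in>B. x \<noteq> y \<longrightarrow> common_nbrs E D x y = lam1) \<and>
     (\<forall>B\<in>P. \<forall>B'\<in>P. B \<noteq> B' \<longrightarrow> (\<forall>x\<in>B. \<forall>y\<in>B'. common_nbrs E D x y = lam2))"

definition proper_ddg_on :: "('v \<Rightarrow> 'v \<Rightarrow> bool) \<Rightarrow> 'v set \<Rightarrow> nat \<Rightarrow> nat \<Rightarrow> nat \<Rightarrow> nat \<Rightarrow> nat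
    \<Rightarrow> nat \<Rightarrow> 'v set set \<Rightarrow> bool" where
  "proper_ddg_on E D V K lam1 lam2 m n P \<longleftrightarrow>
     ddg_on E D V K lam1 lam2 m n P \<and> m \<noteq> 1 \<and> n \<noteq> 1 \<and> lam1 \<noteq> lam2"

end

theory Submission
  imports Defs
begin

text \<open>Write s = -t, so r = 2t. The two eigenvalue equations of \<Gamma> then force
  \<lambda> - \<mu> = t and k - \<mu> = 2t^2; thus t is an integer, and t = 1 would make \<Gamma> complete.
  The degree K of \<Delta> is an eigenvalue of \<Delta>, hence one of k - t, 2t, t, -t. The relations
  K - \<lambda>1 = t^2 and K^2 - \<lambda>2 V = 4t^2 exclude 2t, t and -t at once, while for K = k - t,
  using V = v - c with c (k + t) = v t, the integer \<lambda>1 - \<lambda>2 - t^2 + t equals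
  3 t^2 \<mu> / (k (k - 2t)), which lies strictly between 0 and 1.\<close>

lemma sum_if_one_zero_eq_card:
  "finite A \<Longrightarrow> (\<Sum>x\<in>A. if P x then 1 else (0::real)) = real (card {x\<in>A. P x})"
  by (simp add: sum.If_cases Int_def)

lemma adj_matrix_mult_vec_nth:
  "(adj_matrix E *v x) $ i = (\<Sum>j\<in>UNIV. (if E i j then 1 else 0) * x $ j)"
  by (simp add: adj_matrix_def matrix_vector_mult_def)

lemma adj_matrix_square_nth:
  assumes "is_graph E"
  shows "(adj_matrix E ** adj_matrix E) $ i $ j = real (common_nbrs E UNIV i j)"
proof -
  have "(adj_matrix E ** adj_matrix E) $ i $ j = (\<Sum>z\<in>UNIV. if E i z \<and> E j z then 1 else 0)"
    using assms unfolding is_graph_def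
    by (auto simp: adj_matrix_def matrix_matrix_mult_def intro!: sum.cong)
  then show ?thesis
    by (simp add: sum_if_one_zero_eq_card common_nbrs_def)
qed

lemma srg_adj_square_nth:
  assumes "srg E v k lam mu"
  shows "(adj_matrix E ** adj_matrix E) $ i $ j =
           real mu + (real k - real mu) * (if j = i then 1 else 0)
                   + (real lam - real mu) * (if E i j then 1 else 0)"
  using assms adj_matrix_square_nth[of E i j]
  unfolding srg_def is_graph_def common_nbrs_def by (cases "j = i") auto

lemma srg_adj_square_mult_vec:
  assumes "srg E v k lam mu"
  shows "(adj_matrix E *v (adj_matrix E *v x)) $ i =
           real mu * (\<Sum>j\<in>UNIV. x $ j) + (real k - real mu) * x $ i
             + (real lam - real mu) * (adj_matrix E *v x) $ i"
proof -
  have "(adj_matrix E *v (adj_matrix E *v x)) $ i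
      = (\<Sum>j\<in>UNIV. real mu * x $ j + (real k - real mu) * ((if j = i then 1 else 0) * x $ j)
                   + (real lam - real mu) * ((if E i j then 1 else 0) * x $ j))"
    unfolding matrix_vector_mul_assoc
    by (simp add: matrix_vector_mult_def srg_adj_square_nth[OF assms] algebra_simps)
  also have "\<dots> = real mu * (\<Sum>j\<in>UNIV. x $ j) + (real k - real mu) * x $ i
             + (real lam - real mu) * (adj_matrix E *v x) $ i"
    by (simp add: sum.distrib sum_distrib_left[symmetric] adj_matrix_mult_vec_nth
          if_distrib[of "\<lambda>a. a * _"] cong: if_cong)
  finally show ?thesis .
qed

lemma srg_adj_mult_vec_sum:
  assumes "srg E v k lam mu"
  shows "(\<Sum>i\<in>UNIV. (adj_matrix E *v x) $ i) = real k * (\<Sum>j\<in>UNIV. x $ j)"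
proof -
  have deg: "(\<Sum>i\<in>UNIV. if E i j then 1 else (0::real)) = real k" for j
  proof -
    have "{i. E i j} = {i. E j i}" using assms unfolding srg_def is_graph_def by blast
    then show ?thesis using assms by (simp add: sum_if_one_zero_eq_card srg_def)
  qed
  have "(\<Sum>i\<in>UNIV. (adj_matrix E *v x) $ i)
      = (\<Sum>j\<in>UNIV. (\<Sum>i\<in>UNIV. if E i j then 1 else 0) * x $ j)"
    unfolding adj_matrix_mult_vec_nth sum_distrib_right by (rule sum.swap)
  then show ?thesis by (simp add: deg sum_distrib_left)
qed

lemma srg_eigenvalue_eq:
  assumes "srg E v k lam mu" "adj_matrix E *v x = \<theta> *\<^sub>R x" "x \<noteq> 0" "\<theta> \<noteq> real k"
  shows "\<theta>\<^sup>2 = (real lam - real mu) * \<theta> + (real k - real mu)"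
proof -
  have "\<theta> * (\<Sum>j\<in>UNIV. x $ j) = real k * (\<Sum>j\<in>UNIV. x $ j)"
    using srg_adj_mult_vec_sum[OF assms(1), of x] assms(2) by (simp add: sum_distrib_left)
  then have sum0: "(\<Sum>j\<in>UNIV. x $ j) = 0" using assms(4) by simp
  obtain i where xi: "x $ i \<noteq> 0" using assms(3) by (auto simp: vec_eq_iff)
  have "\<theta>\<^sup>2 * x $ i = (adj_matrix E *v (adj_matrix E *v x)) $ i"
    using assms(2) by (simp add: matrix_vector_mult_scaleR power2_eq_square)
  also have "\<dots> = ((real lam - real mu) * \<theta> + (real k - real mu)) * x $ i"
    unfolding srg_adj_square_mult_vec[OF assms(1)] using assms(2) sum0 by (simp add: algebra_simps)
  finally show ?thesis using xi by simp
qed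

lemma srg_parameter_eq:
  assumes "srg E v k lam mu"
  shows "(real k)\<^sup>2 = real mu * real v + (real k - real mu) + (real lam - real mu) * real k"
proof -
  define one :: "real^'a" where "one = (\<chi> i. 1)"
  have A_one: "adj_matrix E *v one = real k *\<^sub>R one"
    using assms by (simp add: vec_eq_iff one_def adj_matrix_mult_vec_nth sum_if_one_zero_eq_card srg_def)
  obtain i :: 'a where True by simp
  have "(real k)\<^sup>2 = (adj_matrix E *v (adj_matrix E *v one)) $ i"
    using A_one by (simp add: matrix_vector_mult_scaleR power2_eq_square one_def)
  also have "\<dots> = real mu * real v + (real k - real mu) + (real lam - real mu) * real k"
    unfolding srg_adj_square_mult_vec[OF assms] using A_one assms by (simp add: one_def srg_def)
  finally show ?thesis .
qed

lemma srg_parameters_from_eigenvalues: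
  assumes srg: "srg E v k lam mu" and "0 < t" "2 * t < real k"
    and "adj_matrix E *v x = (2 * t) *\<^sub>R x" "x \<noteq> 0"
    and "adj_matrix E *v y = (- t) *\<^sub>R y" "y \<noteq> 0"
  shows "real lam - real mu = t" "real mu = real k - 2 * t\<^sup>2"
    "real v * real mu = (real k - 2 * t) * (real k + t)"
proof -
  have r: "(2 * t)\<^sup>2 = (real lam - real mu) * (2 * t) + (real k - real mu)"
    using srg_eigenvalue_eq[OF srg assms(4,5)] assms(3) by simp
  have s: "(- t)\<^sup>2 = (real lam - real mu) * (- t) + (real k - real mu)"
    using srg_eigenvalue_eq[OF srg assms(6,7)] assms(2,3) by simp
  have "3 * t * (real lam - real mu - t) = 0"
    using r s by (simp add: algebra_simps power2_eq_square)
  then show lm: "real lam - real mu = t" using \<open>0 < t\<close> by simp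
  then show mu: "real mu = real k - 2 * t\<^sup>2" using s by (simp add: power2_eq_square)
  have "real v * real mu = (real k)\<^sup>2 - (real k - real mu) - (real lam - real mu) * real k"
    using srg_parameter_eq[OF srg] by (simp add: algebra_simps)
  also have "\<dots> = (real k)\<^sup>2 - 2 * t\<^sup>2 - t * real k"
    using lm mu by simp
  finally show "real v * real mu = (real k - 2 * t) * (real k + t)"
    by (simp add: algebra_simps power2_eq_square)
qed

lemma primitive_srg_not_complete:
  assumes prim: "primitive_srg E v k lam mu" and "0 < k"
  shows "v \<noteq> k + 1"
proof
  assume v: "v = k + 1"
  have "srg E v k lam mu" using prim by (simp add: primitive_srg_def)
  then have graph: "is_graph E" and deg: "\<And>x. card {y. E x y} = k" and card: "CARD('a) = v"
    by (simp_all add: srg_def)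
  have nbrs: "{y. E x y} = UNIV - {x}" for x
  proof (rule card_subset_eq)
    show "{y. E x y} \<subseteq> UNIV - {x}" using graph by (auto simp: is_graph_def)
    show "card {y. E x y} = card (UNIV - {x})" using deg card v by (simp add: card_Diff_subset)
  qed simp
  obtain x :: 'a where True by simp
  have "{y. E x y} \<noteq> {}" using deg[of x] \<open>0 < k\<close> by (metis card.empty less_irrefl)
  then obtain y where "E x y" by blast
  have "(\<lambda>a b. a \<in> UNIV \<and> b \<in> UNIV \<and> complement_graph E a b)\<^sup>*\<^sup>* x y"
    using prim by (simp add: primitive_srg_def graph_connected_def)
  moreover have "\<not> complement_graph E a b" for a b
    using nbrs[of a] by (auto simp: complement_graph_def)
  ultimately have "x = y" by (auto elim: converse_rtranclpE)
  with \<open>E x y\<close> graph show False by (simp add: is_graph_def)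
qed

lemma eig_mult_pos_iff:
  "0 < eig_mult S M \<theta> \<longleftrightarrow> (\<exists>x\<in>S. M *v x = \<theta> *\<^sub>R x \<and> x \<noteq> 0)"
  unfolding eig_mult_def eig_space_def zero_less_iff_neq_zero dim_eq_0 by auto

lemma has_spectrum_mem_iff:
  assumes "has_spectrum S M sp"
  shows "\<theta> \<in># sp \<longleftrightarrow> (\<exists>x\<in>S. M *v x = \<theta> *\<^sub>R x \<and> x \<noteq> 0)"
  using assms by (simp add: has_spectrum_def eig_mult_pos_iff[symmetric])

lemma ddg_on_adj_mult_ones:
  assumes "ddg_on E D V K lam1 lam2 m n P"
  shows "induced_adj_matrix E D *v ones_on D = real K *\<^sub>R ones_on D"
proof -
  have "(induced_adj_matrix E D *v ones_on D) $ i
      = (\<Sum>j\<in>UNIV. if i \<in> D \<and> j \<in> D \<and> E i j then 1 else 0)" for i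
    unfolding induced_adj_matrix_def ones_on_def matrix_vector_mult_def by (auto intro!: sum.cong)
  also have "(\<Sum>j\<in>UNIV. if i \<in> D \<and> j \<in> D \<and> E i j then 1 else 0) = real K * ones_on D $ i" for i
  proof (cases "i \<in> D")
    case True
    have "{j. i \<in> D \<and> j \<in> D \<and> E i j} = {y \<in> D. E i y}" using True by auto
    then show ?thesis using assms True by (simp add: sum_if_one_zero_eq_card ddg_on_def ones_on_def)
  qed (simp add: ones_on_def)
  finally show ?thesis by (simp add: vec_eq_iff)
qed

lemma primitive_srg_eigenvalues_double_and_neg:
  assumes prim: "primitive_srg E v k lam mu"
    and spec: "has_spectrum UNIV (adj_matrix E)
                 ({#real k#} + replicate_mset f (2 * t) + replicate_mset g (- t))"
    and "0 < f" "0 < g" "0 < t" "2 * t < real k"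
  shows "t = real lam - real mu" "2 \<le> t" "real mu = real k - 2 * t\<^sup>2"
    "real v * real mu = (real k - 2 * t) * (real k + t)" "0 < mu"
proof -
  have srg: "srg E v k lam mu" using prim by (simp add: primitive_srg_def)
  obtain x where x: "adj_matrix E *v x = (2 * t) *\<^sub>R x" "x \<noteq> 0"
    using has_spectrum_mem_iff[OF spec, of "2 * t"] \<open>0 < f\<close> by auto
  obtain y where y: "adj_matrix E *v y = (- t) *\<^sub>R y" "y \<noteq> 0"
    using has_spectrum_mem_iff[OF spec, of "- t"] \<open>0 < g\<close> by auto
  note params = srg_parameters_from_eigenvalues[OF srg assms(5,6) x y]
  show t: "t = real lam - real mu" using params(1) by simp
  show mu: "real mu = real k - 2 * t\<^sup>2" and vmu: "real v * real mu = (real k - 2 * t) * (real k + t)"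
    using params(2,3) .
  have "t \<noteq> 1"
  proof
    assume "t = 1"
    then have "(real k - 2) * (real v - (real k + 1)) = 0" and "real k - 2 \<noteq> 0"
      using vmu[unfolded mu] \<open>2 * t < real k\<close> by (simp_all add: algebra_simps)
    then have "v = k + 1" by simp
    then show False using primitive_srg_not_complete[OF prim] \<open>2 * t < real k\<close> \<open>0 < t\<close> by simp
  qed
  have "0 < real v * real mu" using vmu \<open>0 < t\<close> \<open>2 * t < real k\<close> by simp
  then show "0 < mu" by (simp add: zero_less_mult_iff)
  from \<open>t \<noteq> 1\<close> have "lam \<noteq> mu + 1" using t by auto
  moreover have "mu < lam" using t \<open>0 < t\<close> by simp
  ultimately have "real (mu + 2) \<le> real lam" by simp
  then show "2 \<le> t" using t by simp
qed

lemma ddg_on_nonempty: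
  assumes "ddg_on E D V K lam1 lam2 m n P"
  shows "D \<noteq> {}"
proof -
  have "\<exists>x\<in>D. \<exists>y\<in>D. E x y" using assms by (simp add: ddg_on_def)
  then show ?thesis by blast
qed

lemma proper_ddg_on_classes_ge_two:
  fixes E :: "'v::finite \<Rightarrow> 'v \<Rightarrow> bool"
  assumes "proper_ddg_on E D V K lam1 lam2 m n P"
  shows "2 \<le> m"
proof -
  have ddg: "ddg_on E D V K lam1 lam2 m n P" and "m \<noteq> 1"
    using assms by (simp_all add: proper_ddg_on_def)
  have "\<Union>P = D" "card P = m" using ddg by (simp_all add: ddg_on_def)
  then have "m \<noteq> 0" using ddg_on_nonempty[OF ddg] by auto
  with \<open>m \<noteq> 1\<close> show ?thesis by simp
qed

lemma ddg_on_degree_mem_spectrum: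
  assumes "ddg_on E D V K lam1 lam2 m n P"
    and "has_spectrum (supported_on D) (induced_adj_matrix E D) sp"
  shows "real K \<in># sp"
proof -
  have "ones_on D \<noteq> 0" using ddg_on_nonempty[OF assms(1)] by (auto simp: ones_on_def vec_eq_iff)
  moreover have "ones_on D \<in> supported_on D" by (simp add: ones_on_def supported_on_def)
  ultimately show ?thesis
    using has_spectrum_mem_iff[OF assms(2)] ddg_on_adj_mult_ones[OF assms(1)] by blast
qed

lemma real_sqrt_eq_pos_imp_square:
  fixes x y :: real
  assumes "sqrt x = y" "0 < y"
  shows "y\<^sup>2 = x"
  using assms real_sqrt_gt_0_iff real_sqrt_pow2 by (metis less_imp_le)

lemma coclique_complement_order_mult_mu:
  fixes k t mu v c :: real
  assumes "0 < t" "2 * t < k" "v * mu = (k - 2 * t) * (k + t)" "c * (k + t) = v * t"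
  shows "(v - c) * mu = k * (k - 2 * t)"
proof -
  have "(v - c) * mu * (k + t) = v * mu * (k + t) - (c * (k + t)) * mu"
    by (simp add: algebra_simps)
  also have "\<dots> = v * mu * (k + t) - t * (v * mu)"
    unfolding assms(4) by (simp add: algebra_simps)
  also have "\<dots> = k * (k - 2 * t) * (k + t)"
    unfolding assms(3) by (simp add: algebra_simps)
  finally show ?thesis using assms(1,2) by simp
qed

lemma lambda_gap_strictly_between_0_1:
  fixes t k mu V K lam1 lam2 :: real
  assumes "2 \<le> t" "0 < mu" "mu = k - 2 * t\<^sup>2" "V * mu = k * (k - 2 * t)"
    and "K = k - t" "t\<^sup>2 = K - lam1" "(2 * t)\<^sup>2 = K\<^sup>2 - lam2 * V"
  shows "0 < lam1 - lam2 - t\<^sup>2 + t" "lam1 - lam2 - t\<^sup>2 + t < 1"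
proof -
  have eq: "(lam1 - lam2 - t\<^sup>2 + t) * (k * (k - 2 * t)) = 3 * t\<^sup>2 * mu"
  proof -
    have "lam1 - t\<^sup>2 + t = mu" using assms(3,5,6) by simp
    then have "(lam1 - lam2 - t\<^sup>2 + t) * (k * (k - 2 * t)) = mu * (V * mu) - (lam2 * V) * mu"
      unfolding assms(4)[symmetric] by (simp add: algebra_simps)
    also have "\<dots> = mu * (k * (k - 2 * t)) - (K\<^sup>2 - (2 * t)\<^sup>2) * mu"
      using assms(4,7) by simp
    also have "\<dots> = 3 * t\<^sup>2 * mu"
      unfolding assms(5) by (simp add: algebra_simps power2_eq_square)
    finally show ?thesis .
  qed
  have k: "k = mu + 2 * t\<^sup>2" using assms(3) by simp
  have "k * (k - 2 * t) - 3 * t\<^sup>2 * mu = 4 * t ^ 3 * (t - 1) + mu * t * (t - 2) + mu\<^sup>2"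
    unfolding k by (simp add: algebra_simps power2_eq_square power3_eq_cube)
  moreover have "0 < 4 * t ^ 3 * (t - 1)" "0 \<le> mu * t * (t - 2)" "0 < mu\<^sup>2"
    using assms(1,2) by simp_all
  ultimately have gt: "3 * t\<^sup>2 * mu < k * (k - 2 * t)" by linarith
  moreover have pos: "0 < 3 * t\<^sup>2 * mu" using assms(1,2) by simp
  ultimately have kk: "0 < k * (k - 2 * t)" by linarith
  then have "lam1 - lam2 - t\<^sup>2 + t = 3 * t\<^sup>2 * mu / (k * (k - 2 * t))"
    using eq by (metis less_irrefl nonzero_mult_div_cancel_right)
  then show "0 < lam1 - lam2 - t\<^sup>2 + t" "lam1 - lam2 - t\<^sup>2 + t < 1"
    using gt pos kk by (simp_all add: divide_less_eq_1_pos)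
qed

lemma ddg_degree_candidates_impossible:
  fixes t k mu :: real and K lam1 lam2 V :: nat
  assumes "t \<in> \<int>" "2 \<le> t" "0 < mu" "mu = k - 2 * t\<^sup>2" "real V * mu = k * (k - 2 * t)"
    and "t\<^sup>2 = real K - real lam1" "(2 * t)\<^sup>2 = (real K)\<^sup>2 - real lam2 * real V"
    and "lam1 \<noteq> lam2" "real K \<in> {k - t, 2 * t, t, - t}"
  shows False
  using assms(9)
proof (elim insertE emptyE)
  assume K: "real K = k - t"
  have "real lam1 - real lam2 - t\<^sup>2 + t \<in> \<int>" using assms(1) by (intro Ints_add Ints_diff Ints_power) simp_all
  moreover have "0 < real lam1 - real lam2 - t\<^sup>2 + t" "real lam1 - real lam2 - t\<^sup>2 + t < 1"
    using lambda_gap_strictly_between_0_1[OF assms(2-5) K assms(6,7)] by simp_all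
  ultimately show False by (elim Ints_cases) simp
next
  assume K: "real K = 2 * t"
  then have "t * t \<le> 2 * t" using assms(6) by (simp add: power2_eq_square)
  then have "t = 2" using assms(2) by (simp add: mult_le_cancel_right)
  moreover from this have "real lam1 = 0" using K assms(6) by simp
  moreover have "0 < V" using assms(2-5) by (auto intro!: Nat.gr0I simp: power2_eq_square)
  ultimately show False using assms(7,8) K by simp
next
  assume "real K = t"
  then have "t * t \<le> 1 * t" using assms(6) by (simp add: power2_eq_square)
  then show False using assms(2) by (simp add: mult_le_cancel_right)
next
  assume "real K = - t"
  then show False using assms(2) by simp
qed

theorem mainTheorem5:
  fixes E :: "'v::finite \<Rightarrow> 'v \<Rightarrow> bool"
    and v k lam mu f g :: nat and r s :: real
    and C :: "'v set" and P :: "'v set set"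
    and V K lam1 lam2 m n :: nat
  defines "c \<equiv> card C"
  defines "D \<equiv> UNIV - C"
  defines "A \<equiv> induced_adj_matrix E D"
  defines "W \<equiv> class_const D P"
  defines "Wp \<equiv> orth_in (supported_on D) W"
  defines "W1 \<equiv> {x \<in> W. x \<bullet> ones_on D = 0}"
  defines "f1 \<equiv> eig_mult Wp A (sqrt (real K - real lam1))"
    and "f2 \<equiv> eig_mult Wp A (- sqrt (real K - real lam1))"
    and "g1 \<equiv> eig_mult W1 A (sqrt ((real K)\<^sup>2 - real lam2 * real V))"
    and "g2 \<equiv> eig_mult W1 A (- sqrt ((real K)\<^sup>2 - real lam2 * real V))"
  assumes prim: "primitive_srg E v k lam mu"
    and spec_Gamma: "has_spectrum UNIV (adj_matrix E)
                       ({#real k#} + replicate_mset f r + replicate_mset g s)"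
    and order: "real k > r" "r > s"
    and cocl: "coclique E C"
    and c_size: "real c = real v * s / (s - real k)"
    and ddg: "proper_ddg_on E D V K lam1 lam2 m n P"
    \<comment> \<open>known facts listed in the Setting\<close>
    and Wp_eigs: "\<forall>x\<in>Wp. A *v x \<in> Wp"
                 "\<forall>\<theta>. eig_space Wp A \<theta> \<noteq> {0} \<longrightarrow>
                       \<theta> = sqrt (real K - real lam1) \<or> \<theta> = - sqrt (real K - real lam1)"
                 "f1 + f2 = m * (n - 1)"
    and W1_eigs: "\<forall>x\<in>W1. A *v x \<in> W1"
                 "\<forall>\<theta>. eig_space W1 A \<theta> \<noteq> {0} \<longrightarrow>
                       \<theta> = sqrt ((real K)\<^sup>2 - real lam2 * real V) \<or>
                       \<theta> = - sqrt ((real K)\<^sup>2 - real lam2 * real V)"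
                 "g1 + g2 = m - 1"
    and spec_Delta: "has_spectrum (supported_on D) A
                       ({#real k + s#} + replicate_mset (f + 1 - c) r
                        + replicate_mset (c - 1) (r + s) + replicate_mset (g - c) s)"
    and c_lt_g: "c < g"
  shows "\<not> (r = sqrt ((real K)\<^sup>2 - real lam2 * real V) \<and>
            r + s = sqrt (real K - real lam1) \<and>
            s = - sqrt (real K - real lam1) \<and>
            g2 = 0 \<and> g1 = f + 1 - c \<and> f1 = c - 1 \<and> f2 = g - c)"
proof
  assume H: "r = sqrt ((real K)\<^sup>2 - real lam2 * real V) \<and>
            r + s = sqrt (real K - real lam1) \<and>
            s = - sqrt (real K - real lam1) \<and>
            g2 = 0 \<and> g1 = f + 1 - c \<and> f1 = c - 1 \<and> f2 = g - c"
  define t where "t = sqrt (real K - real lam1)"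
  have s: "s = - t" and r: "r = 2 * t" using H by (simp_all add: t_def)
  then have "0 < t" and k_gt: "2 * t < real k" using order by simp_all
  have t_sq: "t\<^sup>2 = real K - real lam1"
    using real_sqrt_eq_pos_imp_square[OF t_def[symmetric] \<open>0 < t\<close>] .
  have "sqrt ((real K)\<^sup>2 - real lam2 * real V) = 2 * t" using H r by simp
  from real_sqrt_eq_pos_imp_square[OF this] \<open>0 < t\<close>
  have r_sq: "(2 * t)\<^sup>2 = (real K)\<^sup>2 - real lam2 * real V" by simp
  have v: "CARD('v) = v" using prim by (simp add: primitive_srg_def srg_def)
  have c_t: "real c * (real k + t) = real v * t"
    using c_size \<open>0 < t\<close> k_gt by (simp add: s field_simps)
  then have "0 < c" using v \<open>0 < t\<close> k_gt by (auto intro!: Nat.gr0I)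
  then have "0 < f" using H W1_eigs(3) proper_ddg_on_classes_ge_two[OF ddg] by simp
  then have srg_params: "t = real lam - real mu" "2 \<le> t" "real mu = real k - 2 * t\<^sup>2"
      "real v * real mu = (real k - 2 * t) * (real k + t)" "0 < mu"
    using primitive_srg_eigenvalues_double_and_neg[OF prim _ _ _ \<open>0 < t\<close> k_gt] spec_Gamma c_lt_g
    by (simp_all add: r s)
  have ddg0: "ddg_on E D V K lam1 lam2 m n P" and "lam1 \<noteq> lam2"
    using ddg by (simp_all add: proper_ddg_on_def)
  have "card D = V" using ddg0 by (simp add: ddg_on_def)
  then have "real V = real v - real c"
    using card_Diff_subset[of C UNIV] card_mono[of UNIV C] v by (simp add: D_def c_def of_nat_diff)
  then have V_mu: "real V * real mu = real k * (real k - 2 * t)"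
    using coclique_complement_order_mult_mu[OF \<open>0 < t\<close> k_gt srg_params(4) c_t] by simp
  have "real K \<in> {real k - t, 2 * t, t, - t}"
    using ddg_on_degree_mem_spectrum[OF ddg0 spec_Delta[unfolded A_def]]
    by (auto simp: r s split: if_splits)
  then show False
    using ddg_degree_candidates_impossible[OF _ srg_params(2) _ srg_params(3) V_mu t_sq r_sq
        \<open>lam1 \<noteq> lam2\<close>] srg_params(1,5) by simp
qed

end
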